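(* Let $\psi:\mathbb{R}\to\mathbb{R}$ be the Haar wavelet, \[ \psi(t)=\begin{cases}1 & 0\le t<1/2,\\ -1 & 1/2\le t<1,\\ 0 & \text{otherwise},\end{cases} \] and let $f:\mathbb{R}\to\mathbb{R}$ be a continuous and bounded function. Let $T>0$. Suppose that \[ Wf(u,2T):=\int_{-\infty}^{+\infty} f(t)\,\frac{1}{\sqrt{2T}}\,\psi\!\left(\frac{t-u}{2T}\right)\mathrm{d}t=0\quad\text{for all } u\in\mathbb{R}. \] Then $f$ is $T$-periodic, i.e. $f(t+T)=f(t)$ for all $t\in\mathbb{R}$.
   Context: For a wavelet $\psi$ and $u\in\mathbb{R}$, $s>0$, the daughter wavelet is $\psi_{u,s}(t)=\frac{1}{\sqrt{s}}\psi\left(\frac{t-u}{s}\right)$, and the continuous wavelet transform of $f$ at time $u$ and scale $s$ is $Wf(u,s)=\int_{-\infty}^{+\infty} f(t)\,\psi_{u,s}^*(t)\,\mathrm{d}t$ (complex conjugate; here $\psi$ is real). Since the Haar wavelet has compact support and $f$ is bounded and continuous, this integral is well defined even though $f$ need not lie in $L^2(\mathbb{R})$. *)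

theory Defs
  imports "HOL-Analysis.Analysis"
begin

definition haar :: "real \<Rightarrow> real" where
  "haar t = (if 0 \<le> t \<and> t < 1/2 then 1 else if 1/2 \<le> t \<and> t < 1 then -1 else 0)"

definition daughter :: "(real \<Rightarrow> real) \<Rightarrow> real \<Rightarrow> real \<Rightarrow> real \<Rightarrow> real" where
  "daughter \<psi> u s t = (1 / sqrt s) * \<psi> ((t - u) / s)"

text \<open>Continuous wavelet transform (real wavelet, so no conjugation needed).\<close>
definition cwt :: "(real \<Rightarrow> real) \<Rightarrow> (real \<Rightarrow> real) \<Rightarrow> real \<Rightarrow> real \<Rightarrow> real" where
  "cwt \<psi> f u s = integral UNIV (\<lambda>t. f t * daughter \<psi> u s t)"

end

theory Submission
  imports Defs
begin

text \<open>The Haar coefficient at scale \<open>2 T\<close> is, up to the factor \<open>1 / sqrt (2 T)\<close>, the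
  integral of \<open>f\<close> over \<open>[u, u + T]\<close> minus that over \<open>[u + T, u + 2 T]\<close>. Its vanishing thus
  makes the window integral \<open>F u = integral {u..u + T} f\<close> a \<open>T\<close>-periodic function, and then
  so is its derivative \<open>g u = f (u + T) - f u\<close>. Hence \<open>f (t + n T) = f t + n g t\<close> for all
  \<open>n\<close>, and boundedness of \<open>f\<close> forces \<open>g = 0\<close>.\<close>

lemma haar_dilated:
  assumes "T > 0"
  shows "haar ((t - u) / (2 * T)) =
    (if u \<le> t \<and> t < u + T then 1 else if u + T \<le> t \<and> t < u + 2 * T then -1 else 0)"
proof -
  have "0 \<le> (t - u) / (2 * T) \<longleftrightarrow> u \<le> t"
    using assms by (simp add: zero_le_divide_iff)
  moreover have "(t - u) / (2 * T) < 1 / 2 \<longleftrightarrow> t < u + T"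
    using assms by (simp add: divide_less_eq; linarith)
  moreover have "1 / 2 \<le> (t - u) / (2 * T) \<longleftrightarrow> u + T \<le> t"
    using assms by (simp add: le_divide_eq; linarith)
  moreover have "(t - u) / (2 * T) < 1 \<longleftrightarrow> t < u + 2 * T"
    using assms by (simp add: divide_less_eq; linarith)
  ultimately show ?thesis
    unfolding haar_def by presburger
qed

lemma cwt_haar_double_scale:
  fixes f :: "real \<Rightarrow> real"
  assumes "T > 0" and "f integrable_on {u..u + T}" and "f integrable_on {u + T..u + 2 * T}"
  shows "cwt haar f u (2 * T) = (integral {u..u + T} f - integral {u + T..u + 2 * T} f) / sqrt (2 * T)"
proof -
  define h where "h t = (if t \<in> {u..u + T} then f t else 0) - (if t \<in> {u + T..u + 2 * T} then f t else 0)"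
    for t
  have "(h has_integral integral {u..u + T} f - integral {u + T..u + 2 * T} f) UNIV"
    unfolding h_def using assms(2,3)
    by (intro has_integral_diff has_integral_restrict_UNIV[THEN iffD2] integrable_integral)
  then have h_integral: "((\<lambda>t. h t / sqrt (2 * T)) has_integral
      (integral {u..u + T} f - integral {u + T..u + 2 * T} f) / sqrt (2 * T)) UNIV"
    by (rule has_integral_divide)
  have integrand_eq: "f t * daughter haar u (2 * T) t = h t / sqrt (2 * T)"
    if "t \<in> UNIV - {u + T, u + 2 * T}" for t
  proof -
    have "h t = (if u \<le> t \<and> t < u + T then f t else if u + T \<le> t \<and> t < u + 2 * T then - f t else 0)"
      using that assms(1) unfolding h_def by auto
    then show ?thesis
      unfolding daughter_def haar_dilated[OF assms(1)] by simp
  qed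
  show ?thesis
    unfolding cwt_def
    by (rule integral_unique,
        rule has_integral_spike[OF negligible_finite[of "{u + T, u + 2 * T}"] integrand_eq h_integral])
      simp
qed

lemma window_integral_periodic_if_cwt_haar_eq_0:
  fixes f :: "real \<Rightarrow> real"
  assumes "continuous_on UNIV f" and "T > 0" and "cwt haar f u (2 * T) = 0"
  shows "integral {u + T..u + T + T} f = integral {u..u + T} f"
proof -
  have integrable: "f integrable_on {a..b}" for a b
    using continuous_on_subset[OF assms(1) subset_UNIV] by (rule integrable_continuous_interval)
  have "integral {u + T..u + 2 * T} f = integral {u..u + T} f"
    using assms(2,3) cwt_haar_double_scale[OF assms(2) integrable integrable, of u] by simp
  moreover have "u + T + T = u + 2 * T"
    by simp
  ultimately show ?thesis
    by (simp only:)
qed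

lemma has_real_derivative_window_integral:
  fixes f :: "real \<Rightarrow> real"
  assumes "continuous_on UNIV f" and "T \<ge> 0"
  shows "((\<lambda>u. integral {u..u + T} f) has_real_derivative f (x + T) - f x) (at x)"
proof -
  define a where "a = x - 1"
  define I where "I y = integral {a..y} f" for y
  have I_deriv: "(I has_real_derivative f y) (at y)" if "a < y" for y
  proof -
    have "(I has_real_derivative f y) (at y within {a..y + 1})"
      unfolding I_def using that
      by (intro integral_has_real_derivative continuous_on_subset[OF assms(1)]) auto
    moreover have "at y within {a..y + 1} = at y"
      using that by (intro at_within_interior) auto
    ultimately show ?thesis by simp
  qed
  have "((\<lambda>u. I (u + T) - I u) has_real_derivative f (x + T) - f x) (at x)"
    using I_deriv[of "x + T"] I_deriv[of x] assms(2)
    by (intro DERIV_diff) (auto simp: a_def DERIV_shift)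
  then show ?thesis
  proof (rule has_field_derivative_transform_within_open)
    fix u assume "u \<in> {a<..}"
    have "f integrable_on {a..u + T}"
      by (intro integrable_continuous_interval continuous_on_subset[OF assms(1)]) auto
    then have "integral {a..u} f + integral {u..u + T} f = integral {a..u + T} f"
      using \<open>u \<in> {a<..}\<close> assms(2) by (intro Henstock_Kurzweil_Integration.integral_combine) auto
    then show "I (u + T) - I u = integral {u..u + T} f"
      unfolding I_def by simp
  qed (auto simp: a_def)
qed

lemma periodic_imp_derivative_periodic:
  assumes "\<And>u. F (u + T) = F u" and "\<And>x. (F has_real_derivative F' x) (at x)"
  shows "F' (x + T) = F' x"
proof -
  have "((\<lambda>u. F (u + T)) has_real_derivative F' (x + T)) (at x)"
    using assms(2) by (simp add: DERIV_shift[symmetric])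
  then have "(F has_real_derivative F' (x + T)) (at x)"
    by (simp add: assms(1))
  then show ?thesis
    using assms(2) by (rule DERIV_unique)
qed

lemma shift_multiple_if_periodic_increment:
  fixes f :: "real \<Rightarrow> 'a::real_vector"
  assumes "\<And>u. f (u + T + T) - f (u + T) = f (u + T) - f u"
  shows "f (t + real n * T) = f t + real n *\<^sub>R (f (t + T) - f t)"
proof -
  define d where "d u = f (u + T) - f u" for u
  have shift_Suc: "t + real (Suc m) * T = (t + real m * T) + T" for m
    by (simp add: algebra_simps)
  have d_multiple: "d (t + real m * T) = d t" for m
  proof (induction m)
    case (Suc m)
    then show ?case
      unfolding shift_Suc using assms[of "t + real m * T"] by (simp add: d_def)
  qed simp
  have "f (t + real n * T) = f t + real n *\<^sub>R d t"
  proof (induction n)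
    case (Suc n)
    have "f (t + real (Suc n) * T) = f (t + real n * T) + d (t + real n * T)"
      unfolding shift_Suc d_def by simp
    also have "\<dots> = f t + real n *\<^sub>R d t + d t"
      using Suc.IH d_multiple[of n] by simp
    finally show ?case
      by (simp add: algebra_simps)
  qed simp
  then show ?thesis
    by (simp add: d_def)
qed

lemma bounded_arith_progression_step_eq_0:
  fixes a d :: real
  assumes "bounded (range (\<lambda>n::nat. a + real n * d))"
  shows "d = 0"
proof (rule ccontr)
  assume "d \<noteq> 0"
  obtain M where M: "\<And>n::nat. \<bar>a + real n * d\<bar> \<le> M"
    using assms unfolding bounded_iff by auto
  obtain n where n: "2 * M / \<bar>d\<bar> < real n"
    using reals_Archimedean2 by blast
  have "real n * \<bar>d\<bar> \<le> \<bar>a + real n * d\<bar> + \<bar>a\<bar>"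
    by (simp add: abs_mult[symmetric])
  also have "\<dots> \<le> 2 * M"
    using M[of n] M[of 0] by simp
  finally show False
    using n \<open>d \<noteq> 0\<close> by (simp add: divide_less_eq)
qed

theorem proposition2p1:
  fixes f :: "real \<Rightarrow> real" and T :: real
  assumes "continuous_on UNIV f"
    and "bounded (range f)"
    and "T > 0"
    and "\<forall>u. cwt haar f u (2 * T) = 0"
  shows "\<forall>t. f (t + T) = f t"
proof
  fix t
  define F where "F u = integral {u..u + T} f" for u
  have "F (u + T) = F u" for u
    unfolding F_def using assms(1,3,4) by (intro window_integral_periodic_if_cwt_haar_eq_0) auto
  moreover have "(F has_real_derivative f (x + T) - f x) (at x)" for x
    unfolding F_def using assms(1,3) by (intro has_real_derivative_window_integral) auto
  ultimately have "f (u + T + T) - f (u + T) = f (u + T) - f u" for u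
    by (rule periodic_imp_derivative_periodic)
  then have f_multiple: "f (t + real n * T) = f t + real n * (f (t + T) - f t)" for n
    using shift_multiple_if_periodic_increment[of f T t n] by simp
  have "range (\<lambda>n::nat. f t + real n * (f (t + T) - f t)) \<subseteq> range f"
    unfolding f_multiple[symmetric] by blast
  then have "f (t + T) - f t = 0"
    by (intro bounded_arith_progression_step_eq_0 bounded_subset[OF assms(2)])
  then show "f (t + T) = f t"
    by simp
qed

end
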